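(* Let $L$ be a finite lattice with at least three elements, with minimum $\hat 0$ and maximum $\hat 1$, and let $a,b\in L$ with $\hat 0<a<b$. Then $$\sum_{\substack{x\in L\\ x\wedge a=\hat 0}} J(x,b,\hat 1)=0,$$ where terms with $x\not\le b$ are omitted (i.e. $J(x,b,\hat 1)$ is taken as $0$ unless $x\le b$).
   Context: Let $\delta_3(x,y,z)=1$ if $x=y=z$ and $0$ otherwise. The function $J$ on triples $x\le y\le z$ of $L$ is the unique integer-valued function satisfying $\sum_{x\le a\le y\le b\le z}J(a,y,b)=\delta_3(x,y,z)$ for all $x\le y\le z$ in $L$ (sum over $a,b\in L$). *)

theory Defs
  imports Main
begin

definition delta3 :: "'a \<Rightarrow> 'a \<Rightarrow> 'a \<Rightarrow> int" where
  "delta3 x y z = (if x = y \<and> y = z then 1 else 0)"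

text \<open>Outside triples x <= y <= z it is fixed to be 0, so that THE is well defined.\<close>
definition J :: "'a::{finite,bounded_lattice} \<Rightarrow> 'a \<Rightarrow> 'a \<Rightarrow> int" where
  "J = (THE f. (\<forall>x y z. x \<le> y \<and> y \<le> z \<longrightarrow>
              (\<Sum>(a, b) \<in> {(a, b). x \<le> a \<and> a \<le> y \<and> y \<le> b \<and> b \<le> z}. f a y b)
                = delta3 x y z)
         \<and> (\<forall>x y z. \<not> (x \<le> y \<and> y \<le> z) \<longrightarrow> f x y z = 0))"

end

theory Submission
  imports Defs
begin

text \<open>The defining relation of \<open>J\<close> factors over the box \<open>[x,y] \<times> [y,z]\<close>, so the product
  \<open>\<mu>(x,y) \<mu>(y,z)\<close> of Moebius functions satisfies it, and the relation determines \<open>J\<close> by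
  induction on the size of \<open>[x,z]\<close>. The sum is therefore \<open>\<mu>(b,1)\<close> times the sum of \<open>\<mu>(x,b)\<close>
  over \<open>x \<le> b\<close> with \<open>x \<sqinter> a = 0\<close>, which vanishes by Weisner's theorem: write the indicator of
  \<open>x \<sqinter> a = 0\<close> as the sum of \<open>\<mu>(0,y)\<close> over \<open>y \<le> x \<sqinter> a\<close> and exchange the sums; the inner sum
  over \<open>y \<le> x \<le> b\<close> is \<open>\<delta>(y,b)\<close>, and \<open>y = b\<close> is impossible for \<open>y \<le> a\<close>.\<close>

text \<open>Right and left inverses of the zeta function. They coincide, but each is only needed
  through its own defining sum, so we never prove this.\<close>

function moebius_right :: "'a::{finite,order} \<Rightarrow> 'a \<Rightarrow> int" where
  "moebius_right x y =
    (if x = y then 1 else if x \<le> y then - (\<Sum>z \<in> {x..<y}. moebius_right x z) else 0)"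
  by auto
termination
  by (relation "measure (\<lambda>(x, y). card {..<y})") (auto intro!: psubset_card_mono)

function moebius_left :: "'a::{finite,order} \<Rightarrow> 'a \<Rightarrow> int" where
  "moebius_left x y =
    (if x = y then 1 else if x \<le> y then - (\<Sum>z \<in> {x<..y}. moebius_left z y) else 0)"
  by auto
termination
  by (relation "measure (\<lambda>(x, y). card {x<..})") (auto intro!: psubset_card_mono)

declare moebius_right.simps [simp del] moebius_left.simps [simp del]

lemma sum_moebius_right:
  fixes x y :: "'a::{finite,order}"
  assumes "x \<le> y"
  shows "(\<Sum>z \<in> {x..y}. moebius_right x z) = (if x = y then 1 else 0)"
proof -
  have "{x..y} = insert y {x..<y}" using assms by auto
  then show ?thesis using assms by (simp add: moebius_right.simps [of x y])
qed

lemma sum_moebius_left: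
  fixes x y :: "'a::{finite,order}"
  assumes "x \<le> y"
  shows "(\<Sum>z \<in> {x..y}. moebius_left z y) = (if x = y then 1 else 0)"
proof -
  have "{x..y} = insert x {x<..y}" using assms by auto
  then show ?thesis using assms by (simp add: moebius_left.simps [of x y])
qed

lemma sum_moebius_right_atMost:
  fixes c :: "'a::{finite,order_bot}"
  shows "(\<Sum>y \<in> {..c}. moebius_right bot y) = (if c = bot then 1 else 0)"
  using sum_moebius_right [of bot c] by (simp add: atLeastAtMost_def atLeast_def)

lemma box_sums_determine:
  fixes f g :: "'a::{finite,order} \<Rightarrow> 'a \<Rightarrow> 'b::cancel_comm_monoid_add"
  assumes box_sums: "\<And>x z. x \<le> y \<Longrightarrow> y \<le> z \<Longrightarrow>
      (\<Sum>(a, b) \<in> {x..y} \<times> {y..z}. f a b) = (\<Sum>(a, b) \<in> {x..y} \<times> {y..z}. g a b)"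
  shows "x \<le> y \<Longrightarrow> y \<le> z \<Longrightarrow> f x z = g x z"
proof (induction "card {x..z}" arbitrary: x z rule: less_induct)
  case less
  let ?B = "{x..y} \<times> {y..z}"
  have corner: "(x, z) \<in> ?B" using less.prems by simp
  have agree: "f a b = g a b" if "(a, b) \<in> ?B - {(x, z)}" for a b
  proof -
    have "{a..b} \<subset> {x..z}" using that by auto
    then have "card {a..b} < card {x..z}" by (simp add: psubset_card_mono)
    then show ?thesis using less.hyps that by auto
  qed
  have "(\<Sum>(a, b) \<in> ?B - {(x, z)}. f a b) = (\<Sum>(a, b) \<in> ?B - {(x, z)}. g a b)"
    by (rule sum.cong [OF refl]) (metis agree surj_pair case_prod_conv)
  moreover have "(\<Sum>(a, b) \<in> ?B. f a b) = (\<Sum>(a, b) \<in> ?B. g a b)"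
    using box_sums less.prems by blast
  ultimately show ?case
    using sum.remove [OF _ corner, of "\<lambda>(a, b). f a b"] sum.remove [OF _ corner, of "\<lambda>(a, b). g a b"]
    by simp
qed

lemma sum_moebius_product_box:
  fixes x y z :: "'a::{finite,order}"
  assumes "x \<le> y" "y \<le> z"
  shows "(\<Sum>(a, b) \<in> {x..y} \<times> {y..z}. moebius_left a y * moebius_right y b) = delta3 x y z"
proof -
  have "(\<Sum>(a, b) \<in> {x..y} \<times> {y..z}. moebius_left a y * moebius_right y b)
      = (\<Sum>a \<in> {x..y}. moebius_left a y) * (\<Sum>b \<in> {y..z}. moebius_right y b)"
    by (simp add: sum_product sum.cartesian_product)
  also have "\<dots> = delta3 x y z"
    using assms by (simp add: sum_moebius_left sum_moebius_right delta3_def)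
  finally show ?thesis .
qed

lemma J_eq_moebius:
  "J = (\<lambda>x y (z::'a::{finite,bounded_lattice}).
          if x \<le> y \<and> y \<le> z then moebius_left x y * moebius_right y z else 0)"
    (is "_ = ?g")
proof -
  have box: "{(a, b). x \<le> a \<and> a \<le> y \<and> y \<le> b \<and> b \<le> z} = {x..y} \<times> {y..z}" for x y z :: 'a
    by auto
  have g_box: "(\<Sum>(a, b) \<in> {x..y} \<times> {y..z}. ?g a y b) = delta3 x y z"
    if "x \<le> y" "y \<le> z" for x y z
  proof -
    have "(\<Sum>(a, b) \<in> {x..y} \<times> {y..z}. ?g a y b)
        = (\<Sum>(a, b) \<in> {x..y} \<times> {y..z}. moebius_left a y * moebius_right y b)"
      using that by (intro sum.cong) auto
    then show ?thesis using sum_moebius_product_box [OF that] by simp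
  qed
  show ?thesis
    unfolding J_def box
  proof (rule the_equality)
    fix f :: "'a \<Rightarrow> 'a \<Rightarrow> 'a \<Rightarrow> int"
    assume f: "(\<forall>x y z. x \<le> y \<and> y \<le> z \<longrightarrow>
                  (\<Sum>(a, b) \<in> {x..y} \<times> {y..z}. f a y b) = delta3 x y z)
             \<and> (\<forall>x y z. \<not> (x \<le> y \<and> y \<le> z) \<longrightarrow> f x y z = 0)"
    have "f x y z = ?g x y z" if "x \<le> y" "y \<le> z" for x y z
      using box_sums_determine [of y "\<lambda>a b. f a y b" "\<lambda>a b. ?g a y b", OF _ that] f g_box
      by simp
    with f show "f = ?g" by fastforce
  qed (use g_box in auto)
qed

lemma weisner:
  fixes a b :: "'a::{finite,semilattice_inf,order_bot}"
  assumes "\<not> b \<le> a"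
  shows "(\<Sum>x \<in> {x. inf x a = bot \<and> x \<le> b}. moebius_left x b) = 0"
proof -
  have "{x. inf x a = bot \<and> x \<le> b} = {x \<in> {..b}. inf x a = bot}" by auto
  then have "(\<Sum>x \<in> {x. inf x a = bot \<and> x \<le> b}. moebius_left x b)
      = (\<Sum>x \<in> {..b}. moebius_left x b * (if inf x a = bot then 1 else 0))"
    by (simp add: sum.inter_filter [symmetric] if_distrib cong: if_cong)
  also have "\<dots> = (\<Sum>x \<in> {..b}. \<Sum>y \<in> {..a}. if y \<le> x then moebius_left x b * moebius_right bot y else 0)"
  proof (rule sum.cong [OF refl])
    fix x
    have "{..inf x a} = {y \<in> {..a}. y \<le> x}" by auto
    then have "(\<Sum>y \<in> {..inf x a}. moebius_left x b * moebius_right bot y)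
        = (\<Sum>y \<in> {..a}. if y \<le> x then moebius_left x b * moebius_right bot y else 0)"
      by (simp only: sum.inter_filter [OF finite])
    then show "moebius_left x b * (if inf x a = bot then 1 else 0)
        = (\<Sum>y \<in> {..a}. if y \<le> x then moebius_left x b * moebius_right bot y else 0)"
      by (simp add: sum_moebius_right_atMost sum_distrib_left [symmetric])
  qed
  also have "\<dots> = (\<Sum>y \<in> {..a}. \<Sum>x \<in> {..b}. if y \<le> x then moebius_left x b * moebius_right bot y else 0)"
    by (rule sum.swap)
  also have "\<dots> = (\<Sum>y \<in> {..a}. moebius_right bot y * (\<Sum>x \<in> {y..b}. moebius_left x b))"
  proof (rule sum.cong [OF refl])
    fix y
    have "{y..b} = {x \<in> {..b}. y \<le> x}" by auto
    then show "(\<Sum>x \<in> {..b}. if y \<le> x then moebius_left x b * moebius_right bot y else 0)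
        = moebius_right bot y * (\<Sum>x \<in> {y..b}. moebius_left x b)"
      by (simp add: sum.inter_filter [symmetric] sum_distrib_left mult.commute)
  qed
  also have "\<dots> = 0"
  proof (rule sum.neutral, rule ballI)
    fix y assume "y \<in> {..a}"
    with assms have "y \<noteq> b" by auto
    then show "moebius_right bot y * (\<Sum>x \<in> {y..b}. moebius_left x b) = 0"
      by (cases "y \<le> b") (simp_all add: sum_moebius_left)
  qed
  finally show ?thesis .
qed

theorem theorem5p10:
  fixes a b :: "'a::{finite,bounded_lattice}"
  assumes "card (UNIV :: 'a set) \<ge> 3"
    and "bot < a" and "a < b"
  shows "(\<Sum>x \<in> {x. inf x a = bot \<and> x \<le> b}. J x b top) = 0"
proof -
  have "(\<Sum>x \<in> {x. inf x a = bot \<and> x \<le> b}. J x b top)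
      = (\<Sum>x \<in> {x. inf x a = bot \<and> x \<le> b}. moebius_left x b) * moebius_right b top"
    by (simp add: J_eq_moebius sum_distrib_right)
  also have "\<dots> = 0"
    using \<open>a < b\<close> by (simp add: weisner)
  finally show ?thesis .
qed

end
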